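(* Consider the fading dirty paper channel over $\mathbb F_q$: at each channel use $\tau$ the receiver observes $(Y^{(\tau)},G^{(\tau)})$ with $Y^{(\tau)}=X^{(\tau)}+G^{(\tau)}\Theta^{(\tau)}$, where $X^{(\tau)}\in\mathbb F_q$ is the transmitted symbol, and $\Theta^{(\tau)},G^{(\tau)}$ are independent, uniform on $\mathbb F_q$, i.i.d. across channel uses and independent of the message; the whole sequence $\Theta^{[n]}$ is known to the transmitter in advance (non-causally) but not to the receiver, and $G^{[n]}$ is known to the receiver but not to the transmitter. Then the NS-assisted capacity is $C^{\mathrm{NS}}=\log_2 q$, while the classical capacity satisfies $C=o_q(\log_2 q)$, i.e. $C/\log_2q\to0$ as $q\to\infty$. In particular $C^{\mathrm{NS}}/C$ is unbounded as $q\to\infty$.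
   Context: A message $W$ is uniform on a finite set $\mathcal M$. A classical scheme over $n$ uses: a stochastic encoder $X^{[n]}=\phi(W,\Theta^{[n]})$ and stochastic decoder $\hat W=\psi(Y^{[n]},G^{[n]})$. A bipartite non-signaling (NS) box is a conditional pmf $\mathcal Z(u,v\mid s,t)$ (finite output alphabets) such that the marginal of $u$ does not depend on $t$ and the marginal of $v$ does not depend on $s$. An NS-assisted scheme: the transmitter inputs $(W,\Theta^{[n]})$ to the box and obtains $X^{[n]}$, the receiver inputs $(Y^{[n]},G^{[n]})$ and obtains $\hat W$. A rate $R$ is achievable if some sequence of schemes has $\Pr(\hat W\ne W)\to0$ and $\lim\frac1n\log_2|\mathcal M^{(n)}|\ge R$; the capacity is the supremum of achievable rates. *)

theory Defs
  imports "HOL-Algebra.Ring" "HOL-Probability.Probability_Mass_Function"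
begin

definition seqs :: "('a, 'b) ring_scheme \<Rightarrow> nat \<Rightarrow> 'a list set" where
  "seqs R n = {xs. length xs = n \<and> set xs \<subseteq> carrier R}"

definition chan_out :: "('a, 'b) ring_scheme \<Rightarrow> 'a list \<Rightarrow> 'a list \<Rightarrow> 'a list \<Rightarrow> 'a list" where
  "chan_out R xs ts gs = map (\<lambda>i. xs ! i \<oplus>\<^bsub>R\<^esub> (gs ! i \<otimes>\<^bsub>R\<^esub> ts ! i)) [0..<length xs]"

text \<open>Message set {..<m}; stochastic encoder phi w theta (distribution of X^[n]);
  stochastic decoder psi y g (distribution of the estimate).\<close>
definition classical_scheme ::
  "('a, 'b) ring_scheme \<Rightarrow> nat \<Rightarrow> nat \<Rightarrow> (nat \<Rightarrow> 'a list \<Rightarrow> 'a list pmf)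
     \<Rightarrow> ('a list \<Rightarrow> 'a list \<Rightarrow> nat pmf) \<Rightarrow> bool" where
  "classical_scheme R n m enc dec \<longleftrightarrow> m \<ge> 1 \<and>
     (\<forall>w<m. \<forall>ts\<in>seqs R n. set_pmf (enc w ts) \<subseteq> seqs R n)"

text \<open>Pr(hat W = W) with W uniform on {..<m}, Theta^[n], G^[n] i.i.d. uniform, independent.\<close>
definition classical_success ::
  "('a, 'b) ring_scheme \<Rightarrow> nat \<Rightarrow> nat \<Rightarrow> (nat \<Rightarrow> 'a list \<Rightarrow> 'a list pmf)
     \<Rightarrow> ('a list \<Rightarrow> 'a list \<Rightarrow> nat pmf) \<Rightarrow> real" where
  "classical_success R n m enc dec =
     (\<Sum>w<m. \<Sum>ts\<in>seqs R n. \<Sum>gs\<in>seqs R n. \<Sum>xs\<in>seqs R n.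
        pmf (enc w ts) xs * pmf (dec (chan_out R xs ts gs) gs) w)
     / (real m * real (card (carrier R)) ^ (2 * n))"

definition classical_error ::
  "('a, 'b) ring_scheme \<Rightarrow> nat \<Rightarrow> nat \<Rightarrow> (nat \<Rightarrow> 'a list \<Rightarrow> 'a list pmf)
     \<Rightarrow> ('a list \<Rightarrow> 'a list \<Rightarrow> nat pmf) \<Rightarrow> real" where
  "classical_error R n m enc dec = 1 - classical_success R n m enc dec"

definition achievable_classical :: "('a, 'b) ring_scheme \<Rightarrow> real \<Rightarrow> bool" where
  "achievable_classical R r \<longleftrightarrow>
     (\<exists>(m :: nat \<Rightarrow> nat) (enc :: nat \<Rightarrow> nat \<Rightarrow> 'a list \<Rightarrow> 'a list pmf)
        (dec :: nat \<Rightarrow> 'a list \<Rightarrow> 'a list \<Rightarrow> nat pmf) (L :: real).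
        (\<forall>n\<ge>1. classical_scheme R n (m n) (enc n) (dec n)) \<and>
        (\<lambda>n. classical_error R n (m n) (enc n) (dec n)) \<longlonglongrightarrow> 0 \<and>
        (\<lambda>n. log 2 (real (m n)) / real n) \<longlonglongrightarrow> L \<and> L \<ge> r)"

definition capacity_classical :: "('a, 'b) ring_scheme \<Rightarrow> real" where
  "capacity_classical R = Sup {r. achievable_classical R r}"

text \<open>A box Z s t (s = (W, Theta^[n]) transmitter input, t = (Y^[n], G^[n]) receiver input)
  giving a joint distribution of (u, v) = (X^[n], hat W), with finite output alphabets,
  non-signaling on the relevant input domains.\<close>
definition ns_box ::
  "('a, 'b) ring_scheme \<Rightarrow> nat \<Rightarrow> nat
     \<Rightarrow> (nat \<times> 'a list \<Rightarrow> 'a list \<times> 'a list \<Rightarrow> ('a list \<times> nat) pmf) \<Rightarrow> bool" where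
  "ns_box R n m Z \<longleftrightarrow> m \<ge> 1 \<and>
     (\<exists>V. finite V \<and> (\<forall>s\<in>{..<m} \<times> seqs R n. \<forall>t\<in>seqs R n \<times> seqs R n.
         set_pmf (Z s t) \<subseteq> seqs R n \<times> V)) \<and>
     (\<forall>s\<in>{..<m} \<times> seqs R n. \<forall>t\<in>seqs R n \<times> seqs R n. \<forall>t'\<in>seqs R n \<times> seqs R n.
         map_pmf fst (Z s t) = map_pmf fst (Z s t')) \<and>
     (\<forall>s\<in>{..<m} \<times> seqs R n. \<forall>s'\<in>{..<m} \<times> seqs R n. \<forall>t\<in>seqs R n \<times> seqs R n.
         map_pmf snd (Z s t) = map_pmf snd (Z s' t))"

text \<open>Standard semantics of an NS box composed with a channel:
  Pr(X = x, hat W = v | W, Theta, G) = Z((x,v) | (W,Theta), (x + G Theta, G)).\<close>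
definition ns_success ::
  "('a, 'b) ring_scheme \<Rightarrow> nat \<Rightarrow> nat
     \<Rightarrow> (nat \<times> 'a list \<Rightarrow> 'a list \<times> 'a list \<Rightarrow> ('a list \<times> nat) pmf) \<Rightarrow> real" where
  "ns_success R n m Z =
     (\<Sum>w<m. \<Sum>ts\<in>seqs R n. \<Sum>gs\<in>seqs R n. \<Sum>xs\<in>seqs R n.
        pmf (Z (w, ts) (chan_out R xs ts gs, gs)) (xs, w))
     / (real m * real (card (carrier R)) ^ (2 * n))"

definition ns_error ::
  "('a, 'b) ring_scheme \<Rightarrow> nat \<Rightarrow> nat
     \<Rightarrow> (nat \<times> 'a list \<Rightarrow> 'a list \<times> 'a list \<Rightarrow> ('a list \<times> nat) pmf) \<Rightarrow> real" where
  "ns_error R n m Z = 1 - ns_success R n m Z"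

definition achievable_NS :: "('a, 'b) ring_scheme \<Rightarrow> real \<Rightarrow> bool" where
  "achievable_NS R r \<longleftrightarrow>
     (\<exists>(m :: nat \<Rightarrow> nat)
        (Z :: nat \<Rightarrow> nat \<times> 'a list \<Rightarrow> 'a list \<times> 'a list \<Rightarrow> ('a list \<times> nat) pmf) (L :: real).
        (\<forall>n\<ge>1. ns_box R n (m n) (Z n)) \<and>
        (\<lambda>n. ns_error R n (m n) (Z n)) \<longlonglongrightarrow> 0 \<and>
        (\<lambda>n. log 2 (real (m n)) / real n) \<longlonglongrightarrow> L \<and> L \<ge> r)"

definition capacity_NS :: "('a, 'b) ring_scheme \<Rightarrow> real" where
  "capacity_NS R = Sup {r. achievable_NS R r}"

end

theory Submission
  imports Defs "HOL-Algebra.Weak_Morphisms" "HOL-Number_Theory.Residues"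
begin

text \<open>With non-signaling assistance the two parties can share a one-time pad over
  \<open>F\<^sub>q\<^sup>n\<close> (\<open>pad_box\<close>), which transmits \<open>log q\<close> bits per channel use with
  zero error; conversely, non-signaling alone bounds the success probability by \<open>q\<^sup>n / m\<close>.

  Without assistance, the success probability is a sum of products \<open>A D\<close> of output weights and
  decoder probabilities.  Two inputs whose states differ at a position collide for at most one
  fading value there, so the second moment of the output weights is at most \<open>(2q\<^sup>2)\<^sup>n\<close> per
  message, and \<open>AD \<le> TD + A\<^sup>2/(4T)\<close> with \<open>T = 2\<^sup>n\<close> gives success at most \<open>2\<^sup>n/m + 1/4\<close>.
  Hence every classical rate is at most one bit, whatever the field size.\<close>

lemma sum_lists_length_prod:
  fixes F :: "nat \<Rightarrow> 'a \<Rightarrow> 'b::comm_semiring_1"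
  assumes "finite A"
  shows "(\<Sum>xs\<in>{xs. length xs = n \<and> set xs \<subseteq> A}. \<Prod>i<n. F i (xs ! i)) = (\<Prod>i<n. \<Sum>a\<in>A. F i a)"
proof (induction n arbitrary: F)
  case 0
  have "{xs. length xs = 0 \<and> set xs \<subseteq> A} = {[]}" by auto
  then show ?case by simp
next
  case (Suc n)
  let ?L = "\<lambda>n. {xs. length xs = n \<and> set xs \<subseteq> A}"
  have L_Suc: "?L (Suc n) = (\<lambda>(a, xs). a # xs) ` (A \<times> ?L n)"
    by (auto simp: length_Suc_conv image_def)
  have inj: "inj_on (\<lambda>(a, xs). a # xs) (A \<times> ?L n)" by (auto simp: inj_on_def)
  have "(\<Sum>xs\<in>?L (Suc n). \<Prod>i<Suc n. F i (xs ! i))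
      = (\<Sum>(a, xs)\<in>A \<times> ?L n. F 0 a * (\<Prod>i<n. F (Suc i) (xs ! i)))"
    unfolding L_Suc sum.reindex[OF inj]
    by (simp del: prod.lessThan_Suc add: case_prod_unfold prod.lessThan_Suc_shift)
  also have "\<dots> = (\<Sum>a\<in>A. F 0 a) * (\<Sum>xs\<in>?L n. \<Prod>i<n. F (Suc i) (xs ! i))"
    by (simp add: sum.cartesian_product[symmetric] sum_product)
  also have "\<dots> = (\<Prod>i<Suc n. \<Sum>a\<in>A. F i a)"
    using Suc.IH[of "\<lambda>i. F (Suc i)"] by (simp del: prod.lessThan_Suc add: prod.lessThan_Suc_shift)
  finally show ?case .
qed

lemma finite_seqs: "finite (carrier R) \<Longrightarrow> finite (seqs R n)"
  using finite_lists_length_eq by (simp add: seqs_def conj_commute)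

lemma card_seqs: "finite (carrier R) \<Longrightarrow> card (seqs R n) = card (carrier R) ^ n"
  using card_lists_length_eq by (simp add: seqs_def conj_commute)

lemma sum_seqs_prod:
  fixes F :: "nat \<Rightarrow> 'a \<Rightarrow> 'b::comm_semiring_1"
  shows "finite (carrier R) \<Longrightarrow>
    (\<Sum>xs\<in>seqs R n. \<Prod>i<n. F i (xs ! i)) = (\<Prod>i<n. \<Sum>a\<in>carrier R. F i a)"
  unfolding seqs_def by (rule sum_lists_length_prod)

lemma seqs_nth_closed: "xs \<in> seqs R n \<Longrightarrow> i < n \<Longrightarrow> xs ! i \<in> carrier R"
  by (auto simp: seqs_def)

lemma length_seqs: "xs \<in> seqs R n \<Longrightarrow> length xs = n"
  by (simp add: seqs_def)

lemma map_upt_in_seqs: "(\<And>i. i < n \<Longrightarrow> f i \<in> carrier R) \<Longrightarrow> map f [0..<n] \<in> seqs R n"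
  by (auto simp: seqs_def)

lemma replicate_zero_in_seqs: "ring R \<Longrightarrow> replicate n \<zero>\<^bsub>R\<^esub> \<in> seqs R n"
  by (auto simp: seqs_def ring.ring_simprules(2))

lemma card_carrier_pos: "ring R \<Longrightarrow> finite (carrier R) \<Longrightarrow> card (carrier R) > 0"
  using ring.ring_simprules(2) card_gt_0_iff by blast

lemma nth_chan_out: "i < length xs \<Longrightarrow> chan_out R xs ts gs ! i = xs ! i \<oplus>\<^bsub>R\<^esub> gs ! i \<otimes>\<^bsub>R\<^esub> ts ! i"
  by (simp add: chan_out_def)

lemma chan_out_in_seqs:
  assumes "ring R" "xs \<in> seqs R n" "ts \<in> seqs R n" "gs \<in> seqs R n"
  shows "chan_out R xs ts gs \<in> seqs R n"
  using assms unfolding chan_out_def length_seqs[OF assms(2)]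
  by (intro map_upt_in_seqs ring.ring_simprules seqs_nth_closed) auto

lemma pmf_le_pmf_map_snd: "pmf p (x, w) \<le> pmf (map_pmf snd p) w"
proof -
  have "pmf p (x, w) = measure p {(x, w)}" by (simp add: measure_pmf_single)
  also have "\<dots> \<le> measure p (snd -` {w})" by (rule measure_pmf.finite_measure_mono) auto
  finally show ?thesis by (simp add: pmf_map)
qed

lemma sum_pmf_le_1: "finite A \<Longrightarrow> sum (pmf p) A \<le> 1"
  by (metis measure_measure_pmf_finite measure_pmf.prob_le_1)

lemma sum_times_pmf_le:
  fixes h :: "'a \<Rightarrow> real" and P :: "'a \<Rightarrow> 'b pmf"
  assumes "finite A" "finite B" "\<And>a. a \<in> A \<Longrightarrow> h a \<ge> 0"
  shows "(\<Sum>j\<in>A \<times> B. pmf (P (fst j)) (snd j) * h (fst j)) \<le> (\<Sum>a\<in>A. h a)"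
proof -
  have "(\<Sum>j\<in>A \<times> B. pmf (P (fst j)) (snd j) * h (fst j)) = (\<Sum>a\<in>A. h a * (\<Sum>b\<in>B. pmf (P a) b))"
    by (simp add: sum.cartesian_product split_def sum_distrib_left mult.commute)
  also have "\<dots> \<le> (\<Sum>a\<in>A. h a * 1)"
    using assms by (intro sum_mono mult_left_mono sum_pmf_le_1) auto
  finally show ?thesis by simp
qed

lemma sum_pmf_lessThan_le_card:
  fixes m :: nat and P :: "'a \<Rightarrow> 'b \<Rightarrow> nat pmf"
  assumes "finite A" "finite B"
  shows "(\<Sum>w<m. \<Sum>a\<in>A. \<Sum>b\<in>B. pmf (P a b) w) \<le> real (card A) * real (card B)"
proof -
  have "(\<Sum>w<m. \<Sum>a\<in>A. \<Sum>b\<in>B. pmf (P a b) w) = (\<Sum>a\<in>A. \<Sum>b\<in>B. \<Sum>w<m. pmf (P a b) w)"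
    by (subst sum.swap) (simp add: sum.swap[of _ "{..<m}"])
  also have "\<dots> \<le> (\<Sum>a\<in>A. \<Sum>b\<in>B. 1)" by (intro sum_mono sum_pmf_le_1) auto
  finally show ?thesis by simp
qed

text \<open>Non-signaling makes the receiver's marginal independent of the transmitter's input, so
  fixing that input to some \<open>s\<^sub>0\<close> bounds every summand by a probability of a single
  estimate \<open>w\<close>; for each channel realisation these add up to at most one.\<close>
lemma ns_success_le:
  assumes R: "ring R" "finite (carrier R)" and box: "ns_box R n m Z"
  shows "ns_success R n m Z \<le> real (card (carrier R)) ^ n / real m"
proof -
  let ?S = "seqs R n" and ?q = "real (card (carrier R))"
  have "m \<ge> 1" using box by (simp add: ns_box_def)
  define s\<^sub>0 where "s\<^sub>0 = (0::nat, replicate n \<zero>\<^bsub>R\<^esub>)"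
  have s\<^sub>0: "s\<^sub>0 \<in> {..<m} \<times> ?S" using \<open>m \<ge> 1\<close> replicate_zero_in_seqs[OF R(1)] by (simp add: s\<^sub>0_def)
  define P where "P ts gs xs = map_pmf snd (Z s\<^sub>0 (chan_out R xs ts gs, gs))" for ts gs xs
  have le_P: "pmf (Z (w, ts) (chan_out R xs ts gs, gs)) (xs, w) \<le> pmf (P ts gs xs) w"
    if "w < m" "ts \<in> ?S" "gs \<in> ?S" "xs \<in> ?S" for w ts gs xs
  proof -
    have "map_pmf snd (Z (w, ts) (chan_out R xs ts gs, gs)) = P ts gs xs"
      using box that s\<^sub>0 chan_out_in_seqs[OF R(1) that(4,2,3)] unfolding ns_box_def P_def by blast
    then show ?thesis by (metis pmf_le_pmf_map_snd)
  qed
  have "(\<Sum>w<m. \<Sum>ts\<in>?S. \<Sum>gs\<in>?S. \<Sum>xs\<in>?S. pmf (Z (w, ts) (chan_out R xs ts gs, gs)) (xs, w))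
      \<le> (\<Sum>w<m. \<Sum>ts\<in>?S. \<Sum>gs\<in>?S. \<Sum>xs\<in>?S. pmf (P ts gs xs) w)"
    by (intro sum_mono le_P) auto
  also have "\<dots> = (\<Sum>ts\<in>?S. \<Sum>gs\<in>?S. \<Sum>xs\<in>?S. \<Sum>w<m. pmf (P ts gs xs) w)"
    by (subst sum.swap) (simp add: sum.swap[of _ "{..<m}"])
  also have "\<dots> \<le> (\<Sum>ts\<in>?S. \<Sum>gs\<in>?S. \<Sum>xs\<in>?S. 1)"
    by (intro sum_mono sum_pmf_le_1) auto
  also have "\<dots> = ?q ^ n * ?q ^ n * ?q ^ n" by (simp add: card_seqs R(2))
  finally have "ns_success R n m Z \<le> ?q ^ n * ?q ^ n * ?q ^ n / (real m * ?q ^ (2 * n))"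
    unfolding ns_success_def by (rule divide_right_mono) simp
  also have "\<dots> = ?q ^ n / real m"
    using card_carrier_pos[OF R] \<open>m \<ge> 1\<close> by (simp add: mult_2 power_add)
  finally show ?thesis .
qed

definition seq_diff :: "('a, 'b) ring_scheme \<Rightarrow> 'a list \<Rightarrow> 'a list \<Rightarrow> 'a list" where
  "seq_diff R cs xs = map (\<lambda>i. cs ! i \<ominus>\<^bsub>R\<^esub> xs ! i) [0..<length cs]"

definition pad_key :: "('a, 'b) ring_scheme \<Rightarrow> 'a list \<Rightarrow> 'a list \<Rightarrow> 'a list \<Rightarrow> 'a list \<Rightarrow> 'a list" where
  "pad_key R ds ts ys gs = map (\<lambda>i. (ds ! i \<oplus>\<^bsub>R\<^esub> ys ! i) \<ominus>\<^bsub>R\<^esub> gs ! i \<otimes>\<^bsub>R\<^esub> ts ! i) [0..<length ds]"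

text \<open>A one-time pad realised by a box: \<open>X\<close> is uniform and the estimate is the label of
  \<open>d + Y - G\<Theta> - X\<close>, where \<open>d\<close> is the sequence labelled \<open>w\<close> by the bijection \<open>e\<close>.
  On the channel output \<open>Y = X + G\<Theta>\<close> this is \<open>w\<close>; for any fixed inputs it is a uniformly
  distributed label, which is why the box is non-signaling.\<close>
definition pad_box :: "('a, 'b) ring_scheme \<Rightarrow> nat \<Rightarrow> ('a list \<Rightarrow> nat)
    \<Rightarrow> nat \<times> 'a list \<Rightarrow> 'a list \<times> 'a list \<Rightarrow> ('a list \<times> nat) pmf" where
  "pad_box R n e s t = map_pmf
     (\<lambda>xs. (xs, e (seq_diff R (pad_key R (inv_into (seqs R n) e (fst s)) (snd s) (fst t) (snd t)) xs)))
     (pmf_of_set (seqs R n))"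

lemma seq_diff_in_seqs:
  "ring R \<Longrightarrow> cs \<in> seqs R n \<Longrightarrow> xs \<in> seqs R n \<Longrightarrow> seq_diff R cs xs \<in> seqs R n"
  unfolding seq_diff_def by (auto simp: length_seqs intro!: map_upt_in_seqs ring.ring_simprules seqs_nth_closed)

lemma seq_diff_seq_diff:
  assumes "ring R" "cs \<in> seqs R n" "xs \<in> seqs R n"
  shows "seq_diff R cs (seq_diff R cs xs) = xs"
proof (rule nth_equalityI)
  interpret ring R by fact
  fix i assume i: "i < length (seq_diff R cs (seq_diff R cs xs))"
  then have "cs ! i \<in> carrier R" "xs ! i \<in> carrier R"
    using assms by (auto simp: seq_diff_def length_seqs seqs_nth_closed)
  then show "seq_diff R cs (seq_diff R cs xs) ! i = xs ! i"
    using i by (simp add: seq_diff_def) algebra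
qed (use assms in \<open>simp add: seq_diff_def length_seqs\<close>)

lemma bij_betw_seq_diff: "ring R \<Longrightarrow> cs \<in> seqs R n \<Longrightarrow> bij_betw (seq_diff R cs) (seqs R n) (seqs R n)"
  by (rule bij_betw_byWitness[where f' = "seq_diff R cs"]) (auto simp: seq_diff_seq_diff seq_diff_in_seqs)

lemma pad_key_in_seqs:
  assumes "ring R" "ds \<in> seqs R n" "ts \<in> seqs R n" "ys \<in> seqs R n" "gs \<in> seqs R n"
  shows "pad_key R ds ts ys gs \<in> seqs R n"
  using assms unfolding pad_key_def length_seqs[OF assms(2)]
  by (intro map_upt_in_seqs ring.ring_simprules seqs_nth_closed) auto

lemma seq_diff_pad_key_chan_out:
  assumes "ring R" "ds \<in> seqs R n" "ts \<in> seqs R n" "xs \<in> seqs R n" "gs \<in> seqs R n"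
  shows "seq_diff R (pad_key R ds ts (chan_out R xs ts gs) gs) xs = ds"
proof (rule nth_equalityI)
  fix i assume "i < length (seq_diff R (pad_key R ds ts (chan_out R xs ts gs) gs) xs)"
  then have i: "i < n" using assms by (simp add: seq_diff_def pad_key_def length_seqs)
  interpret ring R by fact
  have "ds ! i \<in> carrier R" "xs ! i \<in> carrier R" "gs ! i \<in> carrier R" "ts ! i \<in> carrier R"
    using i assms seqs_nth_closed by blast+
  then have "((ds ! i \<oplus>\<^bsub>R\<^esub> (xs ! i \<oplus>\<^bsub>R\<^esub> gs ! i \<otimes>\<^bsub>R\<^esub> ts ! i)) \<ominus>\<^bsub>R\<^esub> gs ! i \<otimes>\<^bsub>R\<^esub> ts ! i)
      \<ominus>\<^bsub>R\<^esub> xs ! i = ds ! i"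
    by algebra
  then show "seq_diff R (pad_key R ds ts (chan_out R xs ts gs) gs) xs ! i = ds ! i"
    using i assms by (simp add: seq_diff_def pad_key_def nth_chan_out length_seqs)
qed (use assms in \<open>simp add: seq_diff_def pad_key_def length_seqs\<close>)

lemma inv_into_in_seqs: "bij_betw e (seqs R n) {..<m} \<Longrightarrow> w < m \<Longrightarrow> inv_into (seqs R n) e w \<in> seqs R n"
  by (meson bij_betwE bij_betw_inv_into lessThan_iff)

lemma ns_box_pad_box:
  assumes R: "ring R" "finite (carrier R)" and e: "bij_betw e (seqs R n) {..<m}"
  shows "ns_box R n m (pad_box R n e)"
proof -
  let ?S = "seqs R n" and ?U = "pmf_of_set (seqs R n)"
  have S: "finite ?S" "?S \<noteq> {}" using finite_seqs[OF R(2)] replicate_zero_in_seqs[OF R(1)] by auto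
  have "m = card ?S" using bij_betw_same_card[OF e] by simp
  then have "m \<ge> 1" using S by (simp add: Suc_le_eq card_gt_0_iff)
  define key where "key s t = pad_key R (inv_into ?S e (fst s)) (snd s) (fst t) (snd t)" for s t
  have key: "key s t \<in> ?S" if "s \<in> {..<m} \<times> ?S" "t \<in> ?S \<times> ?S" for s t
    using that inv_into_in_seqs[OF e] unfolding key_def by (auto intro!: pad_key_in_seqs[OF R(1)])
  have box: "pad_box R n e s t = map_pmf (\<lambda>xs. (xs, e (seq_diff R (key s t) xs))) ?U" for s t
    by (simp add: pad_box_def key_def)
  have fst: "map_pmf fst (pad_box R n e s t) = ?U" for s t
    by (simp add: box map_pmf_comp)
  have snd: "map_pmf snd (pad_box R n e s t) = map_pmf e ?U"
    if "s \<in> {..<m} \<times> ?S" "t \<in> ?S \<times> ?S" for s t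
  proof -
    have "map_pmf snd (pad_box R n e s t) = map_pmf e (map_pmf (seq_diff R (key s t)) ?U)"
      by (simp add: box map_pmf_comp)
    also have "map_pmf (seq_diff R (key s t)) ?U = ?U"
      using bij_betw_seq_diff[OF R(1) key[OF that]] S by (simp add: map_pmf_of_set_inj bij_betw_def)
    finally show ?thesis .
  qed
  have support: "set_pmf (pad_box R n e s t) \<subseteq> ?S \<times> {..<m}"
    if "s \<in> {..<m} \<times> ?S" "t \<in> ?S \<times> ?S" for s t
    using S seq_diff_in_seqs[OF R(1) key[OF that]] bij_betwE[OF e] by (auto simp: box)
  show ?thesis
    unfolding ns_box_def
  proof (intro conjI exI[of _ "{..<m}"] ballI)
    show "map_pmf snd (pad_box R n e s t) = map_pmf snd (pad_box R n e s' t)"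
      if "s \<in> {..<m} \<times> ?S" "s' \<in> {..<m} \<times> ?S" "t \<in> ?S \<times> ?S" for s s' t
      using snd that by simp
  qed (use \<open>m \<ge> 1\<close> fst support in auto)
qed

lemma ns_success_pad_box:
  assumes R: "ring R" "finite (carrier R)" and e: "bij_betw e (seqs R n) {..<m}"
  shows "ns_success R n m (pad_box R n e) = 1"
proof -
  let ?S = "seqs R n" and ?q = "real (card (carrier R))"
  have S: "finite ?S" "?S \<noteq> {}" using finite_seqs[OF R(2)] replicate_zero_in_seqs[OF R(1)] by auto
  have m: "m = card (carrier R) ^ n" using bij_betw_same_card[OF e] card_seqs[OF R(2)] by simp
  have hit: "pmf (pad_box R n e (w, ts) (chan_out R xs ts gs, gs)) (xs, w) = 1 / ?q ^ n"
    if "w < m" "ts \<in> ?S" "gs \<in> ?S" "xs \<in> ?S" for w ts gs xs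
  proof -
    define f where
      "f = (\<lambda>xs'. (xs', e (seq_diff R (pad_key R (inv_into ?S e w) ts (chan_out R xs ts gs) gs) xs')))"
    have "seq_diff R (pad_key R (inv_into ?S e w) ts (chan_out R xs ts gs) gs) xs = inv_into ?S e w"
      using that inv_into_in_seqs[OF e] by (intro seq_diff_pad_key_chan_out R(1)) auto
    moreover have "e (inv_into ?S e w) = w"
      using e that(1) by (simp add: bij_betw_def f_inv_into_f)
    ultimately have "(xs, w) = f xs" by (simp add: f_def)
    moreover have "pad_box R n e (w, ts) (chan_out R xs ts gs, gs) = map_pmf f (pmf_of_set ?S)"
      by (simp add: pad_box_def f_def)
    ultimately have "pmf (pad_box R n e (w, ts) (chan_out R xs ts gs, gs)) (xs, w)
        = pmf (map_pmf f (pmf_of_set ?S)) (f xs)"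
      by simp
    also have "\<dots> = pmf (pmf_of_set ?S) xs" by (rule pmf_map_inj') (simp add: inj_def f_def)
    finally show ?thesis using that S by (simp add: card_seqs R(2))
  qed
  have "(\<Sum>w<m. \<Sum>ts\<in>?S. \<Sum>gs\<in>?S. \<Sum>xs\<in>?S. pmf (pad_box R n e (w, ts) (chan_out R xs ts gs, gs)) (xs, w))
      = (\<Sum>w<m. \<Sum>ts\<in>?S. \<Sum>gs\<in>?S. \<Sum>xs\<in>?S. 1 / ?q ^ n)"
    by (intro sum.cong refl) (simp add: hit)
  also have "\<dots> = real m * ?q ^ (2 * n)"
    using card_carrier_pos[OF R] by (simp add: card_seqs R(2) m mult_2 power_add)
  finally show ?thesis
    unfolding ns_success_def using card_carrier_pos[OF R] by (simp add: m)
qed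

lemma log_rate_le_of_eventually_le:
  fixes m :: "nat \<Rightarrow> nat" and c b L :: real
  assumes rate: "(\<lambda>n. log 2 (real (m n)) / real n) \<longlonglongrightarrow> L"
    and le: "eventually (\<lambda>n. real (m n) \<le> c * b ^ n) sequentially" and "c \<ge> 1" "b \<ge> 1"
  shows "L \<le> log 2 b"
proof (rule tendsto_le[OF _ _ rate])
  show "(\<lambda>n. log 2 c / real n + log 2 b) \<longlonglongrightarrow> log 2 b"
    using tendsto_add[OF lim_const_over_n[of "log 2 c"] tendsto_const[of "log 2 b"]] by simp
  show "eventually (\<lambda>n. log 2 (real (m n)) / real n \<le> log 2 c / real n + log 2 b) sequentially"
    using le eventually_gt_at_top[of 0]
  proof eventually_elim
    case (elim n)
    have "log 2 (real (m n)) \<le> log 2 c + real n * log 2 b"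
    proof (cases "m n = 0")
      case False
      then have "log 2 (real (m n)) \<le> log 2 (c * b ^ n)" using elim by simp
      also have "\<dots> = log 2 c + real n * log 2 b" using assms by (simp add: log_mult log_nat_power)
      finally show ?thesis .
    next
      case True
      then show ?thesis using assms by (simp add: log_def)
    qed
    then show ?case using elim by (simp add: field_simps)
  qed
qed simp

lemma log_rate_le_of_success_le:
  fixes s :: "nat \<Rightarrow> real" and m :: "nat \<Rightarrow> nat" and b \<delta> L :: real
  assumes succ: "s \<longlonglongrightarrow> 1" and rate: "(\<lambda>n. log 2 (real (m n)) / real n) \<longlonglongrightarrow> L"
    and bound: "eventually (\<lambda>n. s n \<le> b ^ n / real (m n) + \<delta>) sequentially"
    and \<delta>: "0 \<le> \<delta>" "\<delta> < 1" and b: "b \<ge> 1"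
  shows "L \<le> log 2 b"
proof -
  have "eventually (\<lambda>n. s n > (1 + \<delta>) / 2) sequentially"
    using order_tendstoD(1)[OF succ, of "(1 + \<delta>) / 2"] \<delta> by simp
  then have "eventually (\<lambda>n. real (m n) \<le> 2 / (1 - \<delta>) * b ^ n) sequentially"
    using bound
  proof eventually_elim
    case (elim n)
    then have "(1 - \<delta>) / 2 < b ^ n / real (m n)" by argo
    moreover from this have "m n > 0" using \<delta> by (cases "m n = 0") auto
    ultimately show ?case using \<delta> by (simp add: field_simps)
  qed
  then show ?thesis by (rule log_rate_le_of_eventually_le[OF rate]) (use \<delta> b in auto)
qed

lemma achievable_NS_le_log_card:
  assumes R: "ring R" "finite (carrier R)" and "achievable_NS R r"
  shows "r \<le> log 2 (real (card (carrier R)))"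
proof -
  obtain m Z L where box: "\<forall>n\<ge>1. ns_box R n (m n) (Z n)"
    and err: "(\<lambda>n. ns_error R n (m n) (Z n)) \<longlonglongrightarrow> 0"
    and rate: "(\<lambda>n. log 2 (real (m n)) / real n) \<longlonglongrightarrow> L" and "r \<le> L"
    using assms(3) unfolding achievable_NS_def by blast
  have "(\<lambda>n. ns_success R n (m n) (Z n)) \<longlonglongrightarrow> 1"
    using tendsto_diff[OF tendsto_const[of 1] err] by (simp add: ns_error_def)
  moreover have "eventually (\<lambda>n. ns_success R n (m n) (Z n) \<le> real (card (carrier R)) ^ n / real (m n) + 0)
      sequentially"
    using eventually_ge_at_top[of 1] by eventually_elim (simp add: box ns_success_le[OF R])
  ultimately have "L \<le> log 2 (real (card (carrier R)))"
    using card_carrier_pos[OF R] by (intro log_rate_le_of_success_le[OF _ rate, where \<delta> = 0]) auto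
  with \<open>r \<le> L\<close> show ?thesis by simp
qed

lemma achievable_NS_log_card:
  assumes R: "ring R" "finite (carrier R)"
  shows "achievable_NS R (log 2 (real (card (carrier R))))"
proof -
  have "\<forall>n. \<exists>e. bij_betw e (seqs R n) {..<card (seqs R n)}"
    using ex_bij_betw_finite_nat finite_seqs[OF R(2)] by (metis atLeast0LessThan)
  then obtain e where e: "\<And>n. bij_betw (e n) (seqs R n) {..<card (seqs R n)}" by metis
  have "eventually (\<lambda>n. log 2 (real (card (seqs R n))) / real n = log 2 (real (card (carrier R))))
      sequentially"
    using eventually_ge_at_top[of 1] by eventually_elim (simp add: card_seqs R(2) log_nat_power)
  then have "(\<lambda>n. log 2 (real (card (seqs R n))) / real n) \<longlonglongrightarrow> log 2 (real (card (carrier R)))"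
    by (rule tendsto_eventually)
  moreover have "(\<lambda>n. ns_error R n (card (seqs R n)) (pad_box R n (e n))) \<longlonglongrightarrow> 0"
    by (simp add: ns_error_def ns_success_pad_box[OF R e])
  ultimately show ?thesis
    unfolding achievable_NS_def using ns_box_pad_box[OF R e]
    by (intro exI[of _ "\<lambda>n. card (seqs R n)"] exI[of _ "\<lambda>n. pad_box R n (e n)"]) auto
qed

lemma capacity_NS_eq_log_card:
  assumes "ring R" "finite (carrier R)"
  shows "capacity_NS R = log 2 (real (card (carrier R)))"
proof -
  have "achievable_NS R r" if "r \<le> log 2 (real (card (carrier R)))" for r
    using achievable_NS_log_card[OF assms] that unfolding achievable_NS_def by (blast intro: order_trans)
  then have "{r. achievable_NS R r} = {..log 2 (real (card (carrier R)))}"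
    using achievable_NS_le_log_card[OF assms] by auto
  then show ?thesis by (simp add: capacity_NS_def)
qed

lemma of_bool_Ball_eq_prod:
  "finite A \<Longrightarrow> (of_bool (\<forall>i\<in>A. P i) :: 'b::comm_semiring_1) = (\<Prod>i\<in>A. of_bool (P i))"
  by (cases "\<forall>i\<in>A. P i") (auto intro!: prod_zero)

lemma sum_fibres_mult:
  fixes p :: "'j \<Rightarrow> real" and g :: "'y \<Rightarrow> real"
  assumes "finite J" "finite Y" "f ` J \<subseteq> Y"
  shows "(\<Sum>j\<in>J. p j * g (f j)) = (\<Sum>y\<in>Y. (\<Sum>j\<in>{j\<in>J. f j = y}. p j) * g y)"
proof -
  have "(\<Sum>y\<in>Y. (\<Sum>j\<in>{j\<in>J. f j = y}. p j) * g y) = (\<Sum>y\<in>Y. \<Sum>j\<in>{j\<in>J. f j = y}. p j * g (f j))"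
    by (simp add: sum_distrib_right)
  also have "\<dots> = (\<Sum>j\<in>J. p j * g (f j))" using assms by (rule sum.group)
  finally show ?thesis by simp
qed

lemma sum_square_fibre_sums:
  fixes p :: "'j \<Rightarrow> real"
  assumes "finite J" "finite Y" "f ` J \<subseteq> Y"
  shows "(\<Sum>y\<in>Y. (\<Sum>j\<in>{j\<in>J. f j = y}. p j)\<^sup>2) = (\<Sum>j\<in>J. \<Sum>j'\<in>J. of_bool (f j = f j') * (p j * p j'))"
proof -
  have "(\<Sum>y\<in>Y. (\<Sum>j\<in>{j\<in>J. f j = y}. p j)\<^sup>2)
      = (\<Sum>y\<in>Y. \<Sum>j\<in>{j\<in>J. f j = y}. p j * (\<Sum>j'\<in>{j'\<in>J. f j' = f j}. p j'))"
    by (simp add: power2_eq_square sum_distrib_right)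
  also have "\<dots> = (\<Sum>j\<in>J. p j * (\<Sum>j'\<in>{j'\<in>J. f j' = f j}. p j'))" using assms by (rule sum.group)
  also have "\<dots> = (\<Sum>j\<in>J. \<Sum>j'\<in>J. of_bool (f j = f j') * (p j * p j'))"
    using assms(1) by (simp add: sum_distrib_left Int_def conj_commute eq_commute)
  finally show ?thesis .
qed

lemma mult_le_threshold_plus_square:
  fixes A D T :: real
  assumes "A \<ge> 0" "0 \<le> D" "D \<le> 1" "T > 0"
  shows "A * D \<le> T * D + A\<^sup>2 / (4 * T)"
proof (cases "A \<le> T")
  case True
  then show ?thesis using assms by (simp add: mult_right_mono add_increasing2)
next
  case False
  have "A * D = T * D + (A - T) * D" by (simp add: algebra_simps)
  also have "(A - T) * D \<le> A - T" using False assms by (simp add: mult_left_le)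
  also have "A - T \<le> A\<^sup>2 / (4 * T)"
    using assms(4) sum_squares_ge_zero[of "A - 2 * T" 0] by (simp add: field_simps power2_eq_square)
  finally show ?thesis by simp
qed

lemma card_affine_coincidences_le_1:
  fixes R :: "('a, 'b) ring_scheme" (structure)
  assumes "domain R" and carrier: "x \<in> carrier R" "x' \<in> carrier R" "t \<in> carrier R" "t' \<in> carrier R"
    and "t \<noteq> t'"
  shows "card {a \<in> carrier R. x \<oplus> a \<otimes> t = x' \<oplus> a \<otimes> t'} \<le> 1"
proof -
  interpret domain R by fact
  have "t \<ominus> t' \<noteq> \<zero>"
  proof
    assume "t \<ominus> t' = \<zero>"
    moreover have "t = (t \<ominus> t') \<oplus> t'" using carrier by algebra
    ultimately show False using \<open>t \<noteq> t'\<close> carrier by simp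
  qed
  have slope: "a \<otimes> (t \<ominus> t') = x' \<ominus> x" if "a \<in> carrier R" "x \<oplus> a \<otimes> t = x' \<oplus> a \<otimes> t'" for a
  proof -
    have "a \<otimes> (t \<ominus> t') = (x \<oplus> a \<otimes> t) \<ominus> (x \<oplus> a \<otimes> t')" using carrier that(1) by algebra
    also have "\<dots> = (x' \<oplus> a \<otimes> t') \<ominus> (x \<oplus> a \<otimes> t')" using that(2) by simp
    also have "\<dots> = x' \<ominus> x" using carrier that(1) by algebra
    finally show ?thesis .
  qed
  have "a = b" if "a \<in> {a \<in> carrier R. x \<oplus> a \<otimes> t = x' \<oplus> a \<otimes> t'}"
    "b \<in> {a \<in> carrier R. x \<oplus> a \<otimes> t = x' \<oplus> a \<otimes> t'}" for a b
  proof -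
    have "a \<otimes> (t \<ominus> t') = b \<otimes> (t \<ominus> t')" using that slope by auto
    then show "a = b" using m_rcancel[OF \<open>t \<ominus> t' \<noteq> \<zero>\<close>] that carrier by simp
  qed
  then show ?thesis by (cases "finite {a \<in> carrier R. x \<oplus> a \<otimes> t = x' \<oplus> a \<otimes> t'}") (auto simp: card_le_Suc0_iff_eq)
qed

definition agreement_weight :: "nat \<Rightarrow> real \<Rightarrow> 'a list \<Rightarrow> 'a list \<Rightarrow> real" where
  "agreement_weight n q ts ts' = (\<Prod>i<n. if ts ! i = ts' ! i then q else 1)"

lemma agreement_weight_nonneg: "q \<ge> 0 \<Longrightarrow> agreement_weight n q ts ts' \<ge> 0"
  unfolding agreement_weight_def by (intro prod_nonneg) auto

lemma sum_chan_out_coincidences_le: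
  assumes R: "domain R" "finite (carrier R)"
    and seqs: "xs \<in> seqs R n" "xs' \<in> seqs R n" "ts \<in> seqs R n" "ts' \<in> seqs R n"
  shows "(\<Sum>gs\<in>seqs R n. of_bool (chan_out R xs ts gs = chan_out R xs' ts' gs))
     \<le> agreement_weight n (real (card (carrier R))) ts ts'"
proof -
  let ?P = "\<lambda>i a. xs ! i \<oplus>\<^bsub>R\<^esub> a \<otimes>\<^bsub>R\<^esub> ts ! i = xs' ! i \<oplus>\<^bsub>R\<^esub> a \<otimes>\<^bsub>R\<^esub> ts' ! i"
  have "(chan_out R xs ts gs = chan_out R xs' ts' gs) = (\<forall>i\<in>{..<n}. ?P i (gs ! i))" for gs
    using seqs(1,2) by (auto simp: list_eq_iff_nth_eq length_seqs chan_out_def)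
  then have "(\<Sum>gs\<in>seqs R n. of_bool (chan_out R xs ts gs = chan_out R xs' ts' gs))
      = (\<Sum>gs\<in>seqs R n. \<Prod>i<n. of_bool (?P i (gs ! i)) :: real)"
    by (simp add: of_bool_Ball_eq_prod)
  also have "\<dots> = (\<Prod>i<n. \<Sum>a\<in>carrier R. of_bool (?P i a))"
    using R(2) by (rule sum_seqs_prod)
  also have "\<dots> \<le> agreement_weight n (real (card (carrier R))) ts ts'"
    unfolding agreement_weight_def
  proof (intro prod_mono conjI)
    fix i assume "i \<in> {..<n}"
    then have i: "xs ! i \<in> carrier R" "xs' ! i \<in> carrier R" "ts ! i \<in> carrier R" "ts' ! i \<in> carrier R"
      using seqs seqs_nth_closed by auto
    have "card {a \<in> carrier R. ?P i a} \<le> (if ts ! i = ts' ! i then card (carrier R) else 1)"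
      using card_affine_coincidences_le_1[OF R(1) i] R(2) by (auto intro: card_mono)
    then show "(\<Sum>a\<in>carrier R. of_bool (?P i a)) \<le> (if ts ! i = ts' ! i then real (card (carrier R)) else 1)"
      using R(2) by (simp add: Int_def conj_commute split: if_splits)
  qed (simp add: sum_nonneg)
  finally show ?thesis .
qed

lemma sum_agreement_weight_le:
  assumes "finite (carrier R)"
  shows "(\<Sum>ts\<in>seqs R n. \<Sum>ts'\<in>seqs R n. agreement_weight n (real (card (carrier R))) ts ts')
     \<le> (2 * real (card (carrier R)) ^ 2) ^ n"
proof -
  let ?q = "real (card (carrier R))"
  let ?k = "\<lambda>a b. if a = b then ?q else 1"
  have "(\<Sum>ts\<in>seqs R n. \<Sum>ts'\<in>seqs R n. agreement_weight n ?q ts ts')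
      = (\<Sum>ts\<in>seqs R n. \<Prod>i<n. \<Sum>b\<in>carrier R. ?k (ts ! i) b)"
    unfolding agreement_weight_def using assms by (intro sum.cong refl) (rule sum_seqs_prod)
  also have "\<dots> = (\<Sum>a\<in>carrier R. \<Sum>b\<in>carrier R. ?k a b) ^ n"
    using sum_seqs_prod[OF assms, of "\<lambda>i a. \<Sum>b\<in>carrier R. ?k a b" n] by simp
  also have "\<dots> \<le> (2 * ?q\<^sup>2) ^ n"
  proof (rule power_mono)
    have "(\<Sum>b\<in>carrier R. ?k a b) \<le> 2 * ?q" if "a \<in> carrier R" for a
    proof -
      have "(\<Sum>b\<in>carrier R. ?k a b) \<le> (\<Sum>b\<in>carrier R. 1 + of_bool (a = b) * ?q)"
        by (intro sum_mono) auto
      also have "\<dots> = 2 * ?q" using assms that by (simp add: sum.distrib)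
      finally show ?thesis .
    qed
    then have "(\<Sum>a\<in>carrier R. \<Sum>b\<in>carrier R. ?k a b) \<le> (\<Sum>a\<in>carrier R. 2 * ?q)"
      by (rule sum_mono)
    then show "(\<Sum>a\<in>carrier R. \<Sum>b\<in>carrier R. ?k a b) \<le> 2 * ?q\<^sup>2"
      by (simp add: power2_eq_square)
  qed (intro sum_nonneg, auto)
  finally show ?thesis .
qed

text \<open>Summing over the pairs \<open>j = (\<Theta>, X)\<close> gives \<open>q\<^sup>n\<close> times the probability of the output
  \<open>ys\<close> given the message \<open>w\<close> and the fading sequence \<open>gs\<close>.\<close>
definition output_weight :: "('a, 'b) ring_scheme \<Rightarrow> nat \<Rightarrow> (nat \<Rightarrow> 'a list \<Rightarrow> 'a list pmf)
    \<Rightarrow> nat \<Rightarrow> 'a list \<Rightarrow> 'a list \<Rightarrow> real" where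
  "output_weight R n enc w gs ys =
     (\<Sum>j\<in>{j \<in> seqs R n \<times> seqs R n. chan_out R (snd j) (fst j) gs = ys}. pmf (enc w (fst j)) (snd j))"

lemma classical_success_summand_eq:
  assumes R: "ring R" "finite (carrier R)"
  shows "(\<Sum>ts\<in>seqs R n. \<Sum>gs\<in>seqs R n. \<Sum>xs\<in>seqs R n. pmf (enc w ts) xs * pmf (dec (chan_out R xs ts gs) gs) w)
       = (\<Sum>gs\<in>seqs R n. \<Sum>ys\<in>seqs R n. output_weight R n enc w gs ys * pmf (dec ys gs) w)"
proof -
  let ?S = "seqs R n"
  have "(\<Sum>ts\<in>?S. \<Sum>gs\<in>?S. \<Sum>xs\<in>?S. pmf (enc w ts) xs * pmf (dec (chan_out R xs ts gs) gs) w)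
      = (\<Sum>gs\<in>?S. \<Sum>j\<in>?S \<times> ?S. pmf (enc w (fst j)) (snd j) * pmf (dec (chan_out R (snd j) (fst j) gs) gs) w)"
    by (subst sum.swap) (simp add: sum.cartesian_product split_def)
  also have "\<dots> = (\<Sum>gs\<in>?S. \<Sum>ys\<in>?S. output_weight R n enc w gs ys * pmf (dec ys gs) w)"
    unfolding output_weight_def
  proof (rule sum.cong[OF refl])
    fix gs assume "gs \<in> ?S"
    then show "(\<Sum>j\<in>?S \<times> ?S. pmf (enc w (fst j)) (snd j) * pmf (dec (chan_out R (snd j) (fst j) gs) gs) w)
      = (\<Sum>ys\<in>?S. (\<Sum>j\<in>{j \<in> ?S \<times> ?S. chan_out R (snd j) (fst j) gs = ys}. pmf (enc w (fst j)) (snd j))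
          * pmf (dec ys gs) w)"
      using finite_seqs[OF R(2)] chan_out_in_seqs[OF R(1)]
      by (intro sum_fibres_mult) auto
  qed
  finally show ?thesis .
qed

lemma sum_output_weight_square_le:
  assumes R: "domain R" "finite (carrier R)"
  shows "(\<Sum>gs\<in>seqs R n. \<Sum>ys\<in>seqs R n. (output_weight R n enc w gs ys)\<^sup>2)
     \<le> (2 * real (card (carrier R)) ^ 2) ^ n"
proof -
  let ?S = "seqs R n" and ?J = "seqs R n \<times> seqs R n" and ?q = "real (card (carrier R))"
  let ?K = "agreement_weight n ?q"
  have "ring R" using R(1) by (metis cring.axioms(1) domain.axioms(1))
  have fin: "finite ?S" using finite_seqs[OF R(2)] .
  define p where "p j = pmf (enc w (fst j)) (snd j)" for j
  define f where "f gs j = chan_out R (snd j) (fst j) gs" for gs j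
  have "(\<Sum>gs\<in>?S. \<Sum>ys\<in>?S. (output_weight R n enc w gs ys)\<^sup>2)
      = (\<Sum>gs\<in>?S. \<Sum>j\<in>?J. \<Sum>j'\<in>?J. of_bool (f gs j = f gs j') * (p j * p j'))"
    unfolding output_weight_def p_def f_def using fin chan_out_in_seqs[OF \<open>ring R\<close>]
    by (intro sum.cong refl sum_square_fibre_sums) auto
  also have "\<dots> = (\<Sum>j\<in>?J. \<Sum>j'\<in>?J. p j * (p j' * (\<Sum>gs\<in>?S. of_bool (f gs j = f gs j'))))"
    by (subst sum.swap) (simp add: sum.swap[of _ ?S] sum_distrib_left mult_ac)
  also have "\<dots> \<le> (\<Sum>j\<in>?J. \<Sum>j'\<in>?J. p j * (p j' * ?K (fst j) (fst j')))"
    unfolding f_def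
    by (intro sum_mono mult_left_mono sum_chan_out_coincidences_le R) (auto simp: p_def)
  also have "\<dots> \<le> (\<Sum>j\<in>?J. p j * (\<Sum>ts'\<in>?S. ?K (fst j) ts'))"
    unfolding sum_distrib_left[symmetric] p_def
    by (intro sum_mono mult_left_mono sum_times_pmf_le fin agreement_weight_nonneg) auto
  also have "\<dots> \<le> (\<Sum>ts\<in>?S. \<Sum>ts'\<in>?S. ?K ts ts')"
    unfolding p_def by (intro sum_times_pmf_le fin sum_nonneg agreement_weight_nonneg) auto
  also have "\<dots> \<le> (2 * ?q ^ 2) ^ n" using R(2) by (rule sum_agreement_weight_le)
  finally show ?thesis .
qed

lemma classical_success_le:
  assumes R: "domain R" "finite (carrier R)"
  shows "classical_success R n m enc dec \<le> 2 ^ n / real m + 1 / 4"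
proof (cases "m = 0")
  case False
  let ?S = "seqs R n" and ?q = "real (card (carrier R))"
  define T :: real where "T = 2 ^ n"
  define A where "A w gs ys = output_weight R n enc w gs ys" for w gs ys
  define D where "D w gs ys = pmf (dec ys gs) w" for w gs ys
  have "ring R" using R(1) by (metis cring.axioms(1) domain.axioms(1))
  have q: "?q > 0" using card_carrier_pos[OF \<open>ring R\<close> R(2)] by simp
  have D_sum: "(\<Sum>w<m. \<Sum>gs\<in>?S. \<Sum>ys\<in>?S. D w gs ys) \<le> ?q ^ n * ?q ^ n"
    using sum_pmf_lessThan_le_card[OF finite_seqs[OF R(2)] finite_seqs[OF R(2)], where P = "\<lambda>gs ys. dec ys gs"]
    by (simp add: D_def card_seqs R(2))
  have A_sum: "(\<Sum>w<m. \<Sum>gs\<in>?S. \<Sum>ys\<in>?S. (A w gs ys)\<^sup>2) \<le> real m * (2 * ?q ^ 2) ^ n"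
  proof -
    have "(\<Sum>w<m. \<Sum>gs\<in>?S. \<Sum>ys\<in>?S. (A w gs ys)\<^sup>2) \<le> (\<Sum>w<m. (2 * ?q ^ 2) ^ n)"
      unfolding A_def by (rule sum_mono) (rule sum_output_weight_square_le[OF R])
    then show ?thesis by simp
  qed
  have "(\<Sum>w<m. \<Sum>ts\<in>?S. \<Sum>gs\<in>?S. \<Sum>xs\<in>?S. pmf (enc w ts) xs * pmf (dec (chan_out R xs ts gs) gs) w)
      = (\<Sum>w<m. \<Sum>gs\<in>?S. \<Sum>ys\<in>?S. A w gs ys * D w gs ys)"
    unfolding A_def D_def using classical_success_summand_eq[OF \<open>ring R\<close> R(2)] by simp
  also have "\<dots> \<le> (\<Sum>w<m. \<Sum>gs\<in>?S. \<Sum>ys\<in>?S. T * D w gs ys + (A w gs ys)\<^sup>2 / (4 * T))"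
    by (intro sum_mono mult_le_threshold_plus_square)
      (auto simp: A_def D_def output_weight_def T_def pmf_le_1 intro: sum_nonneg)
  also have "\<dots> = T * (\<Sum>w<m. \<Sum>gs\<in>?S. \<Sum>ys\<in>?S. D w gs ys)
      + (\<Sum>w<m. \<Sum>gs\<in>?S. \<Sum>ys\<in>?S. (A w gs ys)\<^sup>2) / (4 * T)"
    by (simp add: sum.distrib sum_distrib_left sum_divide_distrib)
  also have "\<dots> \<le> T * (?q ^ n * ?q ^ n) + real m * (2 * ?q ^ 2) ^ n / (4 * T)"
    using D_sum A_sum by (intro add_mono mult_left_mono divide_right_mono) (auto simp: T_def)
  also have "\<dots> = (2 ^ n / real m + 1 / 4) * (real m * ?q ^ (2 * n))"
  proof -
    have "(2 * ?q ^ 2) ^ n = T * ?q ^ (2 * n)" by (simp add: T_def power_mult_distrib power_mult)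
    moreover have "?q ^ n * ?q ^ n = ?q ^ (2 * n)" by (simp add: mult_2 power_add)
    ultimately show ?thesis using False by (simp add: T_def field_simps)
  qed
  finally show ?thesis
    unfolding classical_success_def using False q by (simp add: divide_le_eq)
qed (simp add: classical_success_def)

lemma achievable_classical_le_1:
  assumes R: "domain R" "finite (carrier R)" and "achievable_classical R r"
  shows "r \<le> 1"
proof -
  obtain m enc dec L where err: "(\<lambda>n. classical_error R n (m n) (enc n) (dec n)) \<longlonglongrightarrow> 0"
    and rate: "(\<lambda>n. log 2 (real (m n)) / real n) \<longlonglongrightarrow> L" and "r \<le> L"
    using assms(3) unfolding achievable_classical_def by blast
  have "(\<lambda>n. classical_success R n (m n) (enc n) (dec n)) \<longlonglongrightarrow> 1"
    using tendsto_diff[OF tendsto_const[of 1] err] by (simp add: classical_error_def)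
  then have "L \<le> log 2 2"
    using classical_success_le[OF R] by (intro log_rate_le_of_success_le[OF _ rate, where \<delta> = "1/4"]) auto
  with \<open>r \<le> L\<close> show ?thesis by simp
qed

lemma achievable_classical_0:
  assumes R: "ring R" "finite (carrier R)"
  shows "achievable_classical R 0"
proof -
  define enc :: "nat \<Rightarrow> nat \<Rightarrow> 'a list \<Rightarrow> 'a list pmf" where "enc n w ts = return_pmf (replicate n \<zero>\<^bsub>R\<^esub>)"
    for n w ts
  define dec :: "nat \<Rightarrow> 'a list \<Rightarrow> 'a list \<Rightarrow> nat pmf" where "dec n ys gs = return_pmf 0" for n ys gs
  have hit: "(\<Sum>xs\<in>seqs R n. pmf (enc n w ts) xs * pmf (dec n (ys xs) gs) 0) = 1" for n w ts ys gs
    using replicate_zero_in_seqs[OF R(1), of n] finite_seqs[OF R(2), of n]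
    by (simp add: enc_def dec_def indicator_def)
  have "carrier R \<noteq> {}" using card_carrier_pos[OF R] by auto
  then have "classical_success R n 1 (enc n) (dec n) = 1" for n
    by (simp add: classical_success_def hit card_seqs R(2) mult_2 power_add)
  then have "(\<lambda>n. classical_error R n 1 (enc n) (dec n)) \<longlonglongrightarrow> 0"
    by (simp add: classical_error_def)
  moreover have "classical_scheme R n 1 (enc n) (dec n)" for n
    using replicate_zero_in_seqs[OF R(1)] by (simp add: classical_scheme_def enc_def)
  ultimately show ?thesis
    unfolding achievable_classical_def by (intro exI[of _ "\<lambda>n. 1"] exI[of _ enc] exI[of _ dec] exI[of _ 0]) auto
qed

lemma capacity_classical_bounds:
  assumes "domain R" "finite (carrier R)"
  shows "0 \<le> capacity_classical R" "capacity_classical R \<le> 1"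
proof -
  have "ring R" using assms(1) by (metis cring.axioms(1) domain.axioms(1))
  have "achievable_classical R 0" using achievable_classical_0[OF \<open>ring R\<close> assms(2)] .
  moreover have "bdd_above {r. achievable_classical R r}"
    using achievable_classical_le_1[OF assms] by (intro bdd_aboveI[of _ 1]) auto
  ultimately show "0 \<le> capacity_classical R"
    unfolding capacity_classical_def by (auto intro: cSup_upper)
  show "capacity_classical R \<le> 1"
    unfolding capacity_classical_def using \<open>achievable_classical R 0\<close> achievable_classical_le_1[OF assms]
    by (auto intro: cSup_least)
qed

lemma exists_finite_field_card_gt: "\<exists>R :: nat ring. field R \<and> finite (carrier R) \<and> card (carrier R) > N"
proof -
  obtain p :: nat where p: "prime p" "p > N" using bigger_prime by blast
  interpret residues_prime p "residue_ring (int p)" by unfold_locales (use p in auto)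
  have inj: "inj_on nat (carrier (residue_ring (int p)))" by (auto simp: res_carrier_eq inj_on_def)
  have "field (image_ring nat (residue_ring (int p)))" by (rule inj_imp_image_ring_is_field[OF inj])
  moreover have "carrier (image_ring nat (residue_ring (int p))) = nat ` {0..int p - 1}"
    by (simp add: image_ring_carrier res_carrier_eq)
  moreover have "card (nat ` {0..int p - 1}) = p"
    using inj by (simp add: card_image res_carrier_eq)
  ultimately show ?thesis using p by (intro exI[of _ "image_ring nat (residue_ring (int p))"]) auto
qed

lemma less_log2_of_gt_nat_ceiling: "n > nat \<lceil>2 powr a\<rceil> \<Longrightarrow> a < log 2 (real n)"
  by (subst less_log_iff) linarith+

lemma abs_capacity_classical_le:
  assumes "domain R" "finite (carrier R)" "\<epsilon> > 0" "card (carrier R) > nat \<lceil>2 powr (1 / \<epsilon>)\<rceil>"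
  shows "\<bar>capacity_classical R\<bar> \<le> \<epsilon> * log 2 (real (card (carrier R)))"
proof -
  have "1 \<le> \<epsilon> * log 2 (real (card (carrier R)))"
    using less_log2_of_gt_nat_ceiling[OF assms(4)] assms(3) by (simp add: field_simps)
  then show ?thesis using capacity_classical_bounds[OF assms(1,2)] by simp
qed

lemma mult_capacity_classical_less_capacity_NS:
  assumes "domain R" "finite (carrier R)" "card (carrier R) > nat \<lceil>2 powr \<bar>B\<bar>\<rceil>"
  shows "B * capacity_classical R < capacity_NS R"
proof -
  have "ring R" using assms(1) by (metis cring.axioms(1) domain.axioms(1))
  have "B * capacity_classical R \<le> \<bar>B\<bar> * capacity_classical R"
    using capacity_classical_bounds[OF assms(1,2)] by (simp add: mult_right_mono)
  also have "\<dots> \<le> \<bar>B\<bar>"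
    using capacity_classical_bounds[OF assms(1,2)] by (simp add: mult_left_le)
  also have "\<dots> < capacity_NS R"
    using less_log2_of_gt_nat_ceiling[OF assms(3)] capacity_NS_eq_log_card[OF \<open>ring R\<close> assms(2)] by simp
  finally show ?thesis .
qed

theorem theorem10:
  shows "(\<forall>R :: nat ring. field R \<and> finite (carrier R) \<longrightarrow>
            capacity_NS R = log 2 (real (card (carrier R))))
       \<and> (\<forall>\<epsilon>>0. \<exists>Q::nat. \<forall>R :: nat ring. field R \<and> finite (carrier R) \<and> card (carrier R) > Q \<longrightarrow>
            \<bar>capacity_classical R\<bar> \<le> \<epsilon> * log 2 (real (card (carrier R))))
       \<and> (\<forall>B::real. \<exists>R :: nat ring. field R \<and> finite (carrier R) \<and>
            capacity_NS R > B * capacity_classical R)"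
proof (intro conjI allI impI)
  fix R :: "nat ring"
  assume "field R \<and> finite (carrier R)"
  then show "capacity_NS R = log 2 (real (card (carrier R)))"
    by (simp add: capacity_NS_eq_log_card field.is_ring)
next
  fix \<epsilon> :: real assume "\<epsilon> > 0"
  then show "\<exists>Q::nat. \<forall>R :: nat ring. field R \<and> finite (carrier R) \<and> card (carrier R) > Q \<longrightarrow>
      \<bar>capacity_classical R\<bar> \<le> \<epsilon> * log 2 (real (card (carrier R)))"
    using abs_capacity_classical_le field.axioms(1) by blast
next
  fix B :: real
  obtain R :: "nat ring" where "field R" "finite (carrier R)" "card (carrier R) > nat \<lceil>2 powr \<bar>B\<bar>\<rceil>"
    using exists_finite_field_card_gt by blast
  then show "\<exists>R :: nat ring. field R \<and> finite (carrier R) \<and> capacity_NS R > B * capacity_classical R"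
    using mult_capacity_classical_less_capacity_NS field.axioms(1) by blast
qed

end
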